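(* Let $U$ be a general quantum walk on a finite graph $G=(V,E)$ with auxiliary space of dimension $d$, such that for every basis state $|a,v\rangle$ the limiting distribution $\pi(\cdot|a,v)$ equals a fixed distribution $\pi$ (necessarily uniform). Let $\epsilon>0$ with $M=M_\epsilon<\infty$. An amplification step from vertex $v$ consists of: choosing $a\in\{1,\dots,d\}$ uniformly at random and $t\in\{0,\dots,M-1\}$ uniformly at random, preparing $|a,v\rangle$, applying $U^t$, and measuring the vertex. Starting from an arbitrary vertex $v_0$ and performing $k\ge1$ successive amplification steps (each starting from the vertex measured at the end of the previous one), the distribution $D_k$ of the final measured vertex satisfies $\|D_k-\pi\|\le\epsilon^k$.
   Context: $\mathcal H=\mathcal H_A\otimes\mathcal H_V$ with basis $|a,v\rangle$. A general quantum walk on $G$ is a unitary $U$ with $U|a,v\rangle$ supported on $|a',v'\rangle$ with $v'=v$ or $v'$ adjacent to $v$. $P_t(\cdot|a,v)$ is the vertex distribution of $U^t|a,v\rangle$, $\bar P_T=\frac1T\sum_{t=0}^{T-1}P_t$, $\pi(\cdot|a,v)=\lim_T\bar P_T(\cdot|a,v)$. Total variation $\|d_1-d_2\|=\sum_v|d_1(v)-d_2(v)|$. Mixing time $M_\epsilon=\min\{T\ge1:\forall t\ge T,\forall|a,v\rangle:\ \|\pi(\cdot|a,v)-\bar P_t(\cdot|a,v)\|\le\epsilon\}$. *)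

theory Defs
  imports Complex_Main
begin

text \<open>A general quantum walk is represented by its matrix
  U :: ('a \<times> 'v) \<Rightarrow> ('a \<times> 'v) \<Rightarrow> complex, where U x y is the amplitude
  of basis state x in U|y>.  'a is the (finite) auxiliary index type
  (d = CARD('a)), 'v the finite vertex type.\<close>

definition unitary_mat :: "('i::finite \<Rightarrow> 'i \<Rightarrow> complex) \<Rightarrow> bool" where
  "unitary_mat U \<longleftrightarrow>
     (\<forall>i j. (\<Sum>k\<in>UNIV. cnj (U k i) * U k j) = (if i = j then 1 else 0)) \<and>
     (\<forall>i j. (\<Sum>k\<in>UNIV. U i k * cnj (U j k)) = (if i = j then 1 else 0))"

definition simple_graph :: "('v \<Rightarrow> 'v \<Rightarrow> bool) \<Rightarrow> bool" where
  "simple_graph E \<longleftrightarrow> (\<forall>u v. E u v \<longrightarrow> E v u) \<and> (\<forall>v. \<not> E v v)"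

definition general_quantum_walk ::
  "('v \<Rightarrow> 'v \<Rightarrow> bool) \<Rightarrow> (('a::finite \<times> 'v::finite) \<Rightarrow> ('a \<times> 'v) \<Rightarrow> complex) \<Rightarrow> bool" where
  "general_quantum_walk E U \<longleftrightarrow> unitary_mat U \<and>
     (\<forall>a v a' v'. U (a', v') (a, v) \<noteq> 0 \<longrightarrow> v' = v \<or> E v v')"

fun walk_state :: "(('a::finite \<times> 'v::finite) \<Rightarrow> ('a \<times> 'v) \<Rightarrow> complex) \<Rightarrow> nat \<Rightarrow> 'a \<Rightarrow> 'v \<Rightarrow> ('a \<times> 'v) \<Rightarrow> complex" where
  "walk_state U 0 a v = (\<lambda>x. if x = (a, v) then 1 else 0)"
| "walk_state U (Suc t) a v = (\<lambda>x. \<Sum>y\<in>UNIV. U x y * walk_state U t a v y)"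

definition Pt :: "(('a::finite \<times> 'v::finite) \<Rightarrow> ('a \<times> 'v) \<Rightarrow> complex) \<Rightarrow> nat \<Rightarrow> 'a \<Rightarrow> 'v \<Rightarrow> 'v \<Rightarrow> real" where
  "Pt U t a v w = (\<Sum>a'\<in>UNIV. (cmod (walk_state U t a v (a', w)))\<^sup>2)"

definition Pbar :: "(('a::finite \<times> 'v::finite) \<Rightarrow> ('a \<times> 'v) \<Rightarrow> complex) \<Rightarrow> nat \<Rightarrow> 'a \<Rightarrow> 'v \<Rightarrow> 'v \<Rightarrow> real" where
  "Pbar U T a v w = (1 / real T) * (\<Sum>t<T. Pt U t a v w)"

definition tv :: "('v::finite \<Rightarrow> real) \<Rightarrow> ('v \<Rightarrow> real) \<Rightarrow> real" where
  "tv d1 d2 = (\<Sum>v\<in>UNIV. \<bar>d1 v - d2 v\<bar>)"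

text \<open>Mixing time w.r.t. the limiting distribution pi(.|a,v) = limd a v.\<close>
definition mixing_set :: "(('a::finite \<times> 'v::finite) \<Rightarrow> ('a \<times> 'v) \<Rightarrow> complex) \<Rightarrow> ('a \<Rightarrow> 'v \<Rightarrow> 'v \<Rightarrow> real) \<Rightarrow> real \<Rightarrow> nat set" where
  "mixing_set U limd \<epsilon> = {T. T \<ge> 1 \<and> (\<forall>t\<ge>T. \<forall>a v. tv (limd a v) (Pbar U t a v) \<le> \<epsilon>)}"

definition mixing_time :: "(('a::finite \<times> 'v::finite) \<Rightarrow> ('a \<times> 'v) \<Rightarrow> complex) \<Rightarrow> ('a \<Rightarrow> 'v \<Rightarrow> 'v \<Rightarrow> real) \<Rightarrow> real \<Rightarrow> nat" where
  "mixing_time U limd \<epsilon> = (LEAST T. T \<in> mixing_set U limd \<epsilon>)"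

definition amp_kernel :: "(('a::finite \<times> 'v::finite) \<Rightarrow> ('a \<times> 'v) \<Rightarrow> complex) \<Rightarrow> nat \<Rightarrow> 'v \<Rightarrow> 'v \<Rightarrow> real" where
  "amp_kernel U M v w = (\<Sum>a::'a\<in>UNIV. (1 / real (card (UNIV::'a set))) * (\<Sum>t<M. (1 / real M) * Pt U t a v w))"

fun amp_dist :: "(('a::finite \<times> 'v::finite) \<Rightarrow> ('a \<times> 'v) \<Rightarrow> complex) \<Rightarrow> nat \<Rightarrow> 'v \<Rightarrow> nat \<Rightarrow> 'v \<Rightarrow> real" where
  "amp_dist U M v0 0 = (\<lambda>w. if w = v0 then 1 else 0)"
| "amp_dist U M v0 (Suc k) = (\<lambda>w. \<Sum>v\<in>UNIV. amp_dist U M v0 k v * amp_kernel U M v w)"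

end

theory Submission
  imports Defs "HOL-Library.Cardinality"
begin

(* The amplification kernel K(v, w) averages P_t(w | a, v) over a and t < M.  Unitarity of U^t
   makes P_t(. | a, v) a probability distribution and gives sum over all sources (a, v) of
   P_t(w | a, v) = d, so K is doubly stochastic; hence the limit pi is uniform and stationary
   for K.  By the choice of M every row of K is within epsilon of pi.  For a distribution D,
   D K - pi = (D - pi)(K - 1 pi), so each step contracts the distance to pi by epsilon. *)

lemma sum_rotate3:
  "(\<Sum>x\<in>A. \<Sum>y\<in>B. \<Sum>z\<in>C. F x y z) = (\<Sum>y\<in>B. \<Sum>z\<in>C. \<Sum>x\<in>A. F x y z)"
  by (subst sum.swap) (simp add: sum.swap[of _ _ C])

lemma unitary_mat_inner_preserving:
  fixes U :: "'i::finite \<Rightarrow> 'i \<Rightarrow> complex"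
  assumes "unitary_mat U"
  shows "(\<Sum>x\<in>UNIV. cnj (\<Sum>y\<in>UNIV. U x y * f y) * (\<Sum>z\<in>UNIV. U x z * g z))
       = (\<Sum>y\<in>UNIV. cnj (f y) * g y)"
proof -
  have cols: "(\<Sum>x\<in>UNIV. cnj (U x y) * U x z) = (if y = z then 1 else 0)" for y z
    using assms unfolding unitary_mat_def by blast
  have "(\<Sum>x\<in>UNIV. cnj (\<Sum>y\<in>UNIV. U x y * f y) * (\<Sum>z\<in>UNIV. U x z * g z))
      = (\<Sum>x\<in>UNIV. \<Sum>y\<in>UNIV. \<Sum>z\<in>UNIV. (cnj (f y) * g z) * (cnj (U x y) * U x z))"
    by (simp add: cnj_sum sum_distrib_left sum_distrib_right mult_ac)
  also have "\<dots> = (\<Sum>y\<in>UNIV. \<Sum>z\<in>UNIV. (cnj (f y) * g z) * (\<Sum>x\<in>UNIV. cnj (U x y) * U x z))"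
    by (subst sum_rotate3) (simp add: sum_distrib_left)
  also have "\<dots> = (\<Sum>y\<in>UNIV. cnj (f y) * g y)"
    by (simp add: cols if_distrib sum.delta cong: if_cong)
  finally show ?thesis .
qed

lemma unitary_mat_mult_orthonormal_rows:
  fixes U :: "'i::finite \<Rightarrow> 'i \<Rightarrow> complex" and B :: "'i \<Rightarrow> 'j::finite \<Rightarrow> complex"
  assumes "unitary_mat U"
    and rows: "\<And>z z'. (\<Sum>y\<in>UNIV. B z y * cnj (B z' y)) = (if z = z' then 1 else 0)"
  shows "(\<Sum>y\<in>UNIV. (\<Sum>z\<in>UNIV. U x z * B z y) * cnj (\<Sum>z'\<in>UNIV. U x' z' * B z' y))
       = (if x = x' then 1 else 0)"
proof -
  have "(\<Sum>y\<in>UNIV. (\<Sum>z\<in>UNIV. U x z * B z y) * cnj (\<Sum>z'\<in>UNIV. U x' z' * B z' y))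
      = (\<Sum>y\<in>UNIV. \<Sum>z\<in>UNIV. \<Sum>z'\<in>UNIV. (U x z * cnj (U x' z')) * (B z y * cnj (B z' y)))"
    by (simp add: cnj_sum sum_distrib_left sum_distrib_right mult_ac)
       (rule sum.cong, simp, rule sum.swap)
  also have "\<dots> = (\<Sum>z\<in>UNIV. \<Sum>z'\<in>UNIV. (U x z * cnj (U x' z')) * (\<Sum>y\<in>UNIV. B z y * cnj (B z' y)))"
    by (subst sum_rotate3) (simp add: sum_distrib_left)
  also have "\<dots> = (\<Sum>z\<in>UNIV. U x z * cnj (U x' z))"
    by (simp add: rows if_distrib sum.delta cong: if_cong)
  also have "\<dots> = (if x = x' then 1 else 0)"
    using assms(1) unfolding unitary_mat_def by blast
  finally show ?thesis .
qed

lemma walk_state_orthonormal: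
  assumes "unitary_mat U"
  shows "(\<Sum>x\<in>UNIV. cnj (walk_state U t a v x) * walk_state U t b u x)
       = (if (a, v) = (b, u) then 1 else 0)"
proof (induction t)
  case 0
  have "cnj (walk_state U 0 a v x) * walk_state U 0 b u x
      = (if x = (a, v) then if (a, v) = (b, u) then 1 else 0 else 0)" for x
    by simp
  then show ?case by simp
next
  case (Suc t)
  then show ?case using unitary_mat_inner_preserving[OF assms] by simp
qed

lemma walk_state_rows_orthonormal:
  assumes "unitary_mat U"
  shows "(\<Sum>y\<in>UNIV. walk_state U t (fst y) (snd y) x * cnj (walk_state U t (fst y) (snd y) x'))
       = (if x = x' then 1 else 0)"
proof (induction t arbitrary: x x')
  case 0
  have "walk_state U 0 (fst y) (snd y) x * cnj (walk_state U 0 (fst y) (snd y) x')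
      = (if y = x then if x = x' then 1 else 0 else 0)" for y
    by auto
  then show ?case by simp
next
  case (Suc t)
  then show ?case
    using unitary_mat_mult_orthonormal_rows[OF assms, of "\<lambda>z y. walk_state U t (fst y) (snd y) z"]
    by simp
qed

lemma Pt_sum_eq_1:
  assumes "unitary_mat U"
  shows "(\<Sum>w\<in>UNIV. Pt U t a v w) = 1"
proof -
  have "complex_of_real (\<Sum>w\<in>UNIV. Pt U t a v w)
      = (\<Sum>x\<in>UNIV. cnj (walk_state U t a v x) * walk_state U t a v x)"
    unfolding Pt_def of_real_sum complex_norm_square
    by (simp add: mult.commute sum.cartesian_product' flip: UNIV_Times_UNIV)
       (subst sum.swap, simp)
  also have "\<dots> = 1"
    using walk_state_orthonormal[OF assms, of t a v a v] by simp
  finally show ?thesis by (metis of_real_eq_1_iff)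
qed

lemma Pt_sum_sources:
  fixes U :: "('a::finite \<times> 'v::finite) \<Rightarrow> ('a \<times> 'v) \<Rightarrow> complex"
  assumes "unitary_mat U"
  shows "(\<Sum>a\<in>UNIV. \<Sum>v\<in>UNIV. Pt U t a v w) = real CARD('a)"
proof -
  let ?amp = "\<lambda>y a'. walk_state U t (fst y) (snd y) (a', w)"
  have "complex_of_real (\<Sum>a\<in>UNIV. \<Sum>v\<in>UNIV. Pt U t a v w)
      = (\<Sum>y\<in>UNIV. \<Sum>a'\<in>UNIV. ?amp y a' * cnj (?amp y a'))"
    unfolding Pt_def of_real_sum complex_norm_square
    by (simp add: sum.cartesian_product' flip: UNIV_Times_UNIV)
  also have "\<dots> = (\<Sum>a'\<in>UNIV. \<Sum>y\<in>UNIV. ?amp y a' * cnj (?amp y a'))"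
    by (rule sum.swap)
  also have "\<dots> = of_nat CARD('a)"
    using walk_state_rows_orthonormal[OF assms] by simp
  finally show ?thesis by (metis of_real_of_nat_eq of_real_eq_iff)
qed

lemma Pbar_sum_eq_1:
  assumes "unitary_mat U" and "T \<ge> 1"
  shows "(\<Sum>w\<in>UNIV. Pbar U T a v w) = 1"
proof -
  have "(\<Sum>w\<in>UNIV. Pbar U T a v w) = (1 / real T) * (\<Sum>t<T. \<Sum>w\<in>UNIV. Pt U t a v w)"
    unfolding Pbar_def by (simp add: sum_distrib_left) (rule sum.swap)
  then show ?thesis using Pt_sum_eq_1[OF assms(1)] assms(2) by simp
qed

lemma Pbar_sum_sources:
  fixes U :: "('a::finite \<times> 'v::finite) \<Rightarrow> ('a \<times> 'v) \<Rightarrow> complex"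
  assumes "unitary_mat U" and "T \<ge> 1"
  shows "(\<Sum>a\<in>UNIV. \<Sum>v\<in>UNIV. Pbar U T a v w) = real CARD('a)"
proof -
  have "(\<Sum>a\<in>UNIV. \<Sum>v\<in>UNIV. Pbar U T a v w)
      = (1 / real T) * (\<Sum>t<T. \<Sum>a\<in>UNIV. \<Sum>v\<in>UNIV. Pt U t a v w)"
    unfolding Pbar_def by (simp add: sum_distrib_left) (rule sum_rotate3[symmetric])
  then show ?thesis using Pt_sum_sources[OF assms(1)] assms(2) by simp
qed

lemma limit_distribution_uniform:
  fixes U :: "('a::finite \<times> 'v::finite) \<Rightarrow> ('a \<times> 'v) \<Rightarrow> complex"
  assumes "unitary_mat U" and lim: "\<And>a v. (\<lambda>T. Pbar U T a v w) \<longlonglongrightarrow> p w"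
  shows "p w = 1 / real CARD('v)"
proof -
  have "(\<lambda>T. \<Sum>a\<in>UNIV. \<Sum>v\<in>UNIV. Pbar U T a v w)
      \<longlonglongrightarrow> (\<Sum>a\<in>(UNIV::'a set). \<Sum>v\<in>(UNIV::'v set). p w)"
    by (intro tendsto_sum lim)
  moreover have "(\<lambda>T. \<Sum>a\<in>UNIV. \<Sum>v\<in>UNIV. Pbar U T a v w) \<longlonglongrightarrow> real CARD('a)"
  proof (rule Lim_transform_eventually[OF tendsto_const])
    show "\<forall>\<^sub>F T in sequentially. real CARD('a) = (\<Sum>a\<in>UNIV. \<Sum>v\<in>UNIV. Pbar U T a v w)"
      using Pbar_sum_sources[OF assms(1)] unfolding eventually_sequentially by metis
  qed
  ultimately have "real CARD('a) * real CARD('v) * p w = real CARD('a)"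
    using LIMSEQ_unique by fastforce
  then show ?thesis by (simp add: field_simps)
qed

lemma amp_kernel_eq_mean_Pbar:
  fixes U :: "('a::finite \<times> 'v::finite) \<Rightarrow> ('a \<times> 'v) \<Rightarrow> complex"
  shows "amp_kernel U M v w = (\<Sum>a\<in>UNIV. Pbar U M a v w) / real CARD('a)"
  unfolding amp_kernel_def Pbar_def
  by (simp add: sum_distrib_left sum_divide_distrib mult.commute)

lemma amp_kernel_sum_eq_1:
  fixes U :: "('a::finite \<times> 'v::finite) \<Rightarrow> ('a \<times> 'v) \<Rightarrow> complex"
  assumes "unitary_mat U" and "M \<ge> 1"
  shows "(\<Sum>w\<in>UNIV. amp_kernel U M v w) = 1"
proof -
  have "(\<Sum>w\<in>UNIV. amp_kernel U M v w) = (\<Sum>a\<in>UNIV. \<Sum>w\<in>UNIV. Pbar U M a v w) / real CARD('a)"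
    unfolding amp_kernel_eq_mean_Pbar sum_divide_distrib[symmetric] by (rule arg_cong2[OF sum.swap refl])
  then show ?thesis by (simp add: Pbar_sum_eq_1[OF assms])
qed

lemma amp_kernel_column_sum_eq_1:
  fixes U :: "('a::finite \<times> 'v::finite) \<Rightarrow> ('a \<times> 'v) \<Rightarrow> complex"
  assumes "unitary_mat U" and "M \<ge> 1"
  shows "(\<Sum>v\<in>UNIV. amp_kernel U M v w) = 1"
proof -
  have "(\<Sum>v\<in>UNIV. amp_kernel U M v w) = (\<Sum>a\<in>UNIV. \<Sum>v\<in>UNIV. Pbar U M a v w) / real CARD('a)"
    unfolding amp_kernel_eq_mean_Pbar sum_divide_distrib[symmetric] by (rule arg_cong2[OF sum.swap refl])
  then show ?thesis by (simp add: Pbar_sum_sources[OF assms])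
qed

lemma tv_amp_kernel_le:
  fixes U :: "('a::finite \<times> 'v::finite) \<Rightarrow> ('a \<times> 'v) \<Rightarrow> complex"
  assumes "\<And>a. tv p (Pbar U M a v) \<le> e"
  shows "tv (amp_kernel U M v) p \<le> e"
proof -
  define d where "d = real CARD('a)"
  have d: "d > 0" unfolding d_def by simp
  have diff: "amp_kernel U M v w - p w = (\<Sum>a\<in>UNIV. Pbar U M a v w - p w) / d" for w
    unfolding amp_kernel_eq_mean_Pbar d_def[symmetric] using d
    by (simp add: sum_subtractf d_def field_simps)
  have "tv (amp_kernel U M v) p = (\<Sum>w\<in>UNIV. \<bar>\<Sum>a\<in>UNIV. Pbar U M a v w - p w\<bar>) / d"
    unfolding tv_def diff abs_divide abs_of_pos[OF d] by (rule sum_divide_distrib[symmetric])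
  also have "\<dots> \<le> (\<Sum>w\<in>UNIV. \<Sum>a\<in>UNIV. \<bar>Pbar U M a v w - p w\<bar>) / d"
    using d by (intro divide_right_mono sum_mono sum_abs) auto
  also have "\<dots> = (\<Sum>a\<in>UNIV. tv p (Pbar U M a v)) / d"
    unfolding tv_def by (subst sum.swap) (simp add: abs_minus_commute)
  also have "\<dots> \<le> (\<Sum>a\<in>(UNIV::'a set). e) / d"
    using d by (intro divide_right_mono sum_mono assms) auto
  also have "\<dots> = e"
    using d by (simp add: d_def)
  finally show ?thesis .
qed

lemma tv_kernel_step_le:
  fixes K :: "'v::finite \<Rightarrow> 'v \<Rightarrow> real"
  assumes stationary: "\<And>w. (\<Sum>v\<in>UNIV. p v * K v w) = p w"
    and close: "\<And>v. tv (K v) p \<le> e"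
    and "(\<Sum>v\<in>UNIV. D v) = 1" and "(\<Sum>v\<in>UNIV. p v) = 1"
  shows "tv (\<lambda>w. \<Sum>v\<in>UNIV. D v * K v w) p \<le> e * tv D p"
proof -
  have centred: "(\<Sum>v\<in>UNIV. D v * K v w) - p w = (\<Sum>v\<in>UNIV. (D v - p v) * (K v w - p w))" for w
  proof -
    have "(\<Sum>v\<in>UNIV. (D v - p v) * (K v w - p w))
        = (\<Sum>v\<in>UNIV. D v * K v w) - (\<Sum>v\<in>UNIV. p v * K v w)
          - (\<Sum>v\<in>UNIV. D v) * p w + (\<Sum>v\<in>UNIV. p v) * p w"
      by (simp add: left_diff_distrib right_diff_distrib sum_subtractf sum.distrib sum_distrib_right)
    then show ?thesis using stationary[of w] assms(3,4) by simp
  qed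
  have "tv (\<lambda>w. \<Sum>v\<in>UNIV. D v * K v w) p
      \<le> (\<Sum>w\<in>UNIV. \<Sum>v\<in>UNIV. \<bar>D v - p v\<bar> * \<bar>K v w - p w\<bar>)"
    unfolding tv_def centred by (intro sum_mono) (metis (no_types, lifting) abs_mult sum.cong sum_abs)
  also have "\<dots> = (\<Sum>v\<in>UNIV. \<bar>D v - p v\<bar> * tv (K v) p)"
    unfolding tv_def by (subst sum.swap) (simp add: sum_distrib_left)
  also have "\<dots> \<le> (\<Sum>v\<in>UNIV. \<bar>D v - p v\<bar> * e)"
    by (intro sum_mono mult_left_mono close) simp
  also have "\<dots> = e * tv D p"
    unfolding tv_def by (simp add: sum_distrib_left mult.commute)
  finally show ?thesis .
qed

lemma amp_dist_sum_eq_1: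
  assumes "\<And>v. (\<Sum>w\<in>UNIV. amp_kernel U M v w) = 1"
  shows "(\<Sum>w\<in>UNIV. amp_dist U M v0 k w) = 1"
proof (induction k)
  case 0
  then show ?case by simp
next
  case (Suc k)
  have "(\<Sum>w\<in>UNIV. amp_dist U M v0 (Suc k) w)
      = (\<Sum>v\<in>UNIV. amp_dist U M v0 k v * (\<Sum>w\<in>UNIV. amp_kernel U M v w))"
    by (simp add: sum_distrib_left) (rule sum.swap)
  then show ?case using Suc assms by simp
qed

lemma amp_dist_1: "amp_dist U M v0 1 = amp_kernel U M v0"
proof
  fix w
  have "(if v = v0 then 1 else 0) * amp_kernel U M v w = (if v = v0 then amp_kernel U M v0 w else 0)" for v
    by simp
  then show "amp_dist U M v0 1 w = amp_kernel U M v0 w" by simp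
qed

lemma tv_amp_dist_le_power:
  assumes stationary: "\<And>w. (\<Sum>v\<in>UNIV. p v * amp_kernel U M v w) = p w"
    and close: "\<And>v. tv (amp_kernel U M v) p \<le> e"
    and stochastic: "\<And>v. (\<Sum>w\<in>UNIV. amp_kernel U M v w) = 1"
    and "(\<Sum>v\<in>UNIV. p v) = 1" and "k \<ge> 1"
  shows "tv (amp_dist U M v0 k) p \<le> e ^ k"
  using \<open>k \<ge> 1\<close>
proof (induction k rule: nat_induct_at_least)
  case base
  show ?case unfolding amp_dist_1 power_one_right by (rule close)
next
  case (Suc k)
  have "tv (amp_dist U M v0 (Suc k)) p \<le> e * tv (amp_dist U M v0 k) p"
    unfolding amp_dist.simps
    by (rule tv_kernel_step_le[OF stationary close amp_dist_sum_eq_1[OF stochastic] assms(4)])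
  also have "\<dots> \<le> e * e ^ k"
  proof (rule mult_left_mono[OF Suc.IH])
    show "0 \<le> e"
      using close[of v0] unfolding tv_def by (meson order_trans sum_nonneg abs_ge_zero)
  qed
  finally show ?case by simp
qed

lemma mixing_time_in_mixing_set:
  "mixing_set U p \<epsilon> \<noteq> {} \<Longrightarrow> mixing_time U p \<epsilon> \<in> mixing_set U p \<epsilon>"
  unfolding mixing_time_def by (metis LeastI_ex ex_in_conv)

theorem mainTheorem10:
  fixes E :: "'v::finite \<Rightarrow> 'v \<Rightarrow> bool"
    and U :: "('a::finite \<times> 'v) \<Rightarrow> ('a \<times> 'v) \<Rightarrow> complex"
    and limd :: "'v \<Rightarrow> real"
    and \<epsilon> :: real and v0 :: 'v and k :: nat
  assumes "simple_graph E"
    and "general_quantum_walk E U"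
    and "\<And>a v w. (\<lambda>T. Pbar U T a v w) \<longlonglongrightarrow> limd w"
    and "\<epsilon> > 0"
    and "mixing_set U (\<lambda>a v. limd) \<epsilon> \<noteq> {}"
    and "k \<ge> 1"
  shows "tv (amp_dist U (mixing_time U (\<lambda>a v. limd) \<epsilon>) v0 k) limd \<le> \<epsilon> ^ k"
proof -
  define M where "M = mixing_time U (\<lambda>a v. limd) \<epsilon>"
  have U: "unitary_mat U"
    using assms(2) unfolding general_quantum_walk_def by blast
  have "M \<in> mixing_set U (\<lambda>a v. limd) \<epsilon>"
    unfolding M_def using assms(5) by (rule mixing_time_in_mixing_set)
  then have M: "M \<ge> 1" and mixed: "\<And>a v. tv limd (Pbar U M a v) \<le> \<epsilon>"
    unfolding mixing_set_def by auto
  have uniform: "limd w = 1 / real CARD('v)" for w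
    using U assms(3) by (rule limit_distribution_uniform)
  have "tv (amp_dist U M v0 k) limd \<le> \<epsilon> ^ k"
  proof (rule tv_amp_dist_le_power)
    show "(\<Sum>v\<in>UNIV. limd v * amp_kernel U M v w) = limd w" for w
      using amp_kernel_column_sum_eq_1[OF U M] by (simp add: uniform flip: sum_divide_distrib)
    show "tv (amp_kernel U M v) limd \<le> \<epsilon>" for v
      using mixed by (rule tv_amp_kernel_le)
    show "(\<Sum>w\<in>UNIV. amp_kernel U M v w) = 1" for v
      using U M by (rule amp_kernel_sum_eq_1)
    show "(\<Sum>v\<in>UNIV. limd v) = 1"
      by (simp add: uniform)
  qed (rule assms(6))
  then show ?thesis unfolding M_def .
qed

end
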